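(* Let $\Bbbk$ be an algebraically closed field of characteristic $0$, let $\mathfrak q$ be a finite-dimensional Lie algebra over $\Bbbk$, and let $\vartheta\in\mathrm{Aut}(\mathfrak q)$ be an automorphism of finite order $m\ge 1$ with fixed-point subalgebra $\mathfrak q_0=\mathfrak q^\vartheta$. Let $n\ge 1$, $\mathfrak r=\mathfrak q^{\oplus n}$, and let $\tilde\vartheta\in\mathrm{Aut}(\mathfrak r)$ be defined by $\tilde\vartheta(y_1,y_2,\ldots,y_n)=(y_n,\vartheta(y_1),y_2,\ldots,y_{n-1})$. Suppose that $\mathfrak q_0^*\cap\mathfrak q^*_{\mathsf{reg}}\neq\varnothing$. Then $\mathfrak r_0^*\cap\mathfrak r^*_{\mathsf{reg}}\neq\varnothing$.
   Context: Fix a primitive $m$-th root of unity $\zeta$; $\mathfrak q_i$ ($i=0,\dots,m-1$) is the $\zeta^i$-eigenspace of $\vartheta$, so $\mathfrak q=\bigoplus_i\mathfrak q_i$. The space $\mathfrak q_0^*$ is identified with the annihilator of $\bigoplus_{i=1}^{m-1}\mathfrak q_i$ in $\mathfrak q^*$. Similarly $\mathfrak r_0=\mathfrak r^{\tilde\vartheta}$ and $\mathfrak r_0^*$ denotes the annihilator in $\mathfrak r^*$ of the sum of all eigenspaces of $\tilde\vartheta$ with eigenvalue $\neq 1$. For a finite-dimensional Lie algebra $\mathfrak a$ and $\xi\in\mathfrak a^*$, $\mathfrak a^\xi=\{x\in\mathfrak a: \mathrm{ad}^*(x)\xi=0\}$; the index is $\mathrm{ind}\,\mathfrak a=\min_{\xi\in\mathfrak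 a^*}\dim\mathfrak a^\xi$, and $\mathfrak a^*_{\mathsf{reg}}=\{\xi\in\mathfrak a^*:\dim\mathfrak a^\xi=\mathrm{ind}\,\mathfrak a\}$. *)

theory Defs
  imports Main "HOL-Library.Function_Algebras" "HOL-Computational_Algebra.Polynomial"
begin

text \<open>A Lie algebra is modelled as a carrier subspace L of an ambient vector space
  (type 'v with scalar multiplication scale over the field 'k), with a bracket br.\<close>

definition lie_algebra ::
  "('k::field \<Rightarrow> 'v::ab_group_add \<Rightarrow> 'v) \<Rightarrow> 'v set \<Rightarrow> ('v \<Rightarrow> 'v \<Rightarrow> 'v) \<Rightarrow> bool" where
  "lie_algebra scale L br \<longleftrightarrow>
     vector_space scale \<and> module.subspace scale L \<and>
     (\<forall>x\<in>L. \<forall>y\<in>L. br x y \<in> L) \<and>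
     (\<forall>x\<in>L. \<forall>y\<in>L. \<forall>z\<in>L. br (x + y) z = br x z + br y z) \<and>
     (\<forall>x\<in>L. \<forall>y\<in>L. \<forall>z\<in>L. br x (y + z) = br x y + br x z) \<and>
     (\<forall>c. \<forall>x\<in>L. \<forall>y\<in>L. br (scale c x) y = scale c (br x y)) \<and>
     (\<forall>c. \<forall>x\<in>L. \<forall>y\<in>L. br x (scale c y) = scale c (br x y)) \<and>
     (\<forall>x\<in>L. br x x = 0) \<and>
     (\<forall>x\<in>L. \<forall>y\<in>L. \<forall>z\<in>L. br x (br y z) + br y (br z x) + br z (br x y) = 0)"

definition fin_dim :: "('k::field \<Rightarrow> 'v::ab_group_add \<Rightarrow> 'v) \<Rightarrow> 'v set \<Rightarrow> bool" where
  "fin_dim scale L \<longleftrightarrow> (\<exists>B. finite B \<and> B \<subseteq> L \<and> module.span scale B = L)"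

definition lie_aut ::
  "('k::field \<Rightarrow> 'v::ab_group_add \<Rightarrow> 'v) \<Rightarrow> 'v set \<Rightarrow> ('v \<Rightarrow> 'v \<Rightarrow> 'v) \<Rightarrow> ('v \<Rightarrow> 'v) \<Rightarrow> bool" where
  "lie_aut scale L br \<theta> \<longleftrightarrow>
     bij_betw \<theta> L L \<and>
     (\<forall>x\<in>L. \<forall>y\<in>L. \<theta> (x + y) = \<theta> x + \<theta> y) \<and>
     (\<forall>c. \<forall>x\<in>L. \<theta> (scale c x) = scale c (\<theta> x)) \<and>
     (\<forall>x\<in>L. \<forall>y\<in>L. \<theta> (br x y) = br (\<theta> x) (\<theta> y))"

definition dual_space :: "('k::field \<Rightarrow> 'v::ab_group_add \<Rightarrow> 'v) \<Rightarrow> 'v set \<Rightarrow> ('v \<Rightarrow> 'k) set" where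
  "dual_space scale L = {\<xi>.
     (\<forall>x\<in>L. \<forall>y\<in>L. \<xi> (x + y) = \<xi> x + \<xi> y) \<and>
     (\<forall>c. \<forall>x\<in>L. \<xi> (scale c x) = c * \<xi> x) \<and>
     (\<forall>x. x \<notin> L \<longrightarrow> \<xi> x = 0)}"

definition coad :: "'v set \<Rightarrow> ('v \<Rightarrow> 'v \<Rightarrow> 'v) \<Rightarrow> 'v \<Rightarrow> ('v \<Rightarrow> 'k::field) \<Rightarrow> ('v \<Rightarrow> 'k)" where
  "coad L br x \<xi> = (\<lambda>y. if y \<in> L then - \<xi> (br x y) else 0)"

definition stabilizer :: "'v set \<Rightarrow> ('v \<Rightarrow> 'v \<Rightarrow> 'v) \<Rightarrow> ('v \<Rightarrow> 'k::field) \<Rightarrow> 'v set" where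
  "stabilizer L br \<xi> = {x \<in> L. coad L br x \<xi> = (\<lambda>_. 0)}"

definition lie_index :: "('k::field \<Rightarrow> 'v::ab_group_add \<Rightarrow> 'v) \<Rightarrow> 'v set \<Rightarrow> ('v \<Rightarrow> 'v \<Rightarrow> 'v) \<Rightarrow> nat" where
  "lie_index scale L br = (INF \<xi>\<in>dual_space scale L. vector_space.dim scale (stabilizer L br \<xi>))"

definition regular_dual :: "('k::field \<Rightarrow> 'v::ab_group_add \<Rightarrow> 'v) \<Rightarrow> 'v set \<Rightarrow> ('v \<Rightarrow> 'v \<Rightarrow> 'v) \<Rightarrow> ('v \<Rightarrow> 'k) set" where
  "regular_dual scale L br = {\<xi> \<in> dual_space scale L.
     vector_space.dim scale (stabilizer L br \<xi>) = lie_index scale L br}"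

definition eigenspace :: "('k::field \<Rightarrow> 'v::ab_group_add \<Rightarrow> 'v) \<Rightarrow> 'v set \<Rightarrow> ('v \<Rightarrow> 'v) \<Rightarrow> 'k \<Rightarrow> 'v set" where
  "eigenspace scale L \<theta> c = {x \<in> L. \<theta> x = scale c x}"

definition annihilator :: "('k::field \<Rightarrow> 'v::ab_group_add \<Rightarrow> 'v) \<Rightarrow> 'v set \<Rightarrow> 'v set \<Rightarrow> ('v \<Rightarrow> 'k) set" where
  "annihilator scale L S = {\<xi> \<in> dual_space scale L. \<forall>x\<in>S. \<xi> x = 0}"

text \<open>q_0^*: annihilator of q_1 + ... + q_{m-1}, where q_i is the zeta^i-eigenspace.\<close>
definition fixed_dual_root ::
  "('k::field \<Rightarrow> 'v::ab_group_add \<Rightarrow> 'v) \<Rightarrow> 'v set \<Rightarrow> ('v \<Rightarrow> 'v) \<Rightarrow> nat \<Rightarrow> 'k \<Rightarrow> ('v \<Rightarrow> 'k) set" where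
  "fixed_dual_root scale L \<theta> m \<zeta> =
     annihilator scale L (module.span scale (\<Union>i\<in>{1..<m}. eigenspace scale L \<theta> (\<zeta> ^ i)))"

text \<open>r_0^*: annihilator of the sum of all eigenspaces with eigenvalue different from 1.\<close>
definition fixed_dual ::
  "('k::field \<Rightarrow> 'v::ab_group_add \<Rightarrow> 'v) \<Rightarrow> 'v set \<Rightarrow> ('v \<Rightarrow> 'v) \<Rightarrow> ('v \<Rightarrow> 'k) set" where
  "fixed_dual scale L \<theta> =
     annihilator scale L (module.span scale (\<Union>c\<in>{c. c \<noteq> 1}. eigenspace scale L \<theta> c))"

text \<open>Direct sum r = q^{\<oplus> n}: tuples (y_0,...,y_{n-1}) as functions nat => 'v,
  zero from index n on.\<close>
definition sum_carrier :: "nat \<Rightarrow> 'v set \<Rightarrow> (nat \<Rightarrow> 'v::zero) set" where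
  "sum_carrier n L = {f. (\<forall>i<n. f i \<in> L) \<and> (\<forall>i\<ge>n. f i = 0)}"

definition sum_scale :: "('k \<Rightarrow> 'v \<Rightarrow> 'v) \<Rightarrow> 'k \<Rightarrow> (nat \<Rightarrow> 'v) \<Rightarrow> (nat \<Rightarrow> 'v)" where
  "sum_scale scale c f = (\<lambda>i. scale c (f i))"

definition sum_bracket :: "nat \<Rightarrow> ('v \<Rightarrow> 'v \<Rightarrow> 'v) \<Rightarrow> (nat \<Rightarrow> 'v) \<Rightarrow> (nat \<Rightarrow> 'v) \<Rightarrow> (nat \<Rightarrow> 'v::zero)" where
  "sum_bracket n br f g = (\<lambda>i. if i < n then br (f i) (g i) else 0)"

text \<open>(y_1,...,y_n) |-> (y_n, theta y_1, y_2, ..., y_{n-1}) (0-indexed here); for n = 1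
  this is theta itself.\<close>
definition cyc_twist :: "nat \<Rightarrow> ('v \<Rightarrow> 'v) \<Rightarrow> (nat \<Rightarrow> 'v) \<Rightarrow> (nat \<Rightarrow> 'v::zero)" where
  "cyc_twist n \<theta> f = (\<lambda>i. if i < n then
       (if i = 1 mod n then \<theta> (f ((i + n - 1) mod n)) else f ((i + n - 1) mod n))
     else 0)"

end

(* Let \<xi> be a regular element of q\<^sub>0\<^sup>* and put \<Xi>(y\<^sub>1, ..., y\<^sub>n) = \<xi>(y\<^sub>1) + ... + \<xi>(y\<^sub>n).
   For every \<Phi> in r\<^sup>* with components \<Phi>\<^sub>1, ..., \<Phi>\<^sub>n in q\<^sup>*, the stabiliser of \<Phi> in r is the
   product of the stabilisers of the \<Phi>\<^sub>i in q, so its dimension is at least n ind q, with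
   equality for \<Phi> = \<Xi>. Hence ind r = n ind q and \<Xi> is regular.
   Averaging over the powers of \<theta> writes every element of q as a sum of eigenvectors with
   eigenvalues \<zeta>\<^sup>i (dividing by m needs characteristic 0); \<xi> kills those with i \<noteq> 0, so it
   is \<theta>-invariant. Then \<Xi> is invariant under the twisted shift, and an invariant functional
   kills every eigenvector whose eigenvalue is not 1, i.e. \<Xi> lies in r\<^sub>0\<^sup>*. *)

theory Submission
  imports Defs
begin

lemma sum_fun_apply: "sum f A x = (\<Sum>a\<in>A. f a x)"
  by (induct A rule: infinite_finite_induct) auto

lemma additive_on_sum:
  fixes h :: "'a::comm_monoid_add \<Rightarrow> 'b::comm_monoid_add"
  assumes "\<And>x y. x \<in> S \<Longrightarrow> y \<in> S \<Longrightarrow> h (x + y) = h x + h y"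
    and "\<And>x y. x \<in> S \<Longrightarrow> y \<in> S \<Longrightarrow> x + y \<in> S" and "0 \<in> S" and "h 0 = 0"
    and "\<And>a. a \<in> A \<Longrightarrow> g a \<in> S"
  shows "h (sum g A) = (\<Sum>a\<in>A. h (g a))"
proof -
  have "sum g A \<in> S \<and> h (sum g A) = (\<Sum>a\<in>A. h (g a))"
    using assms(5) by (induct A rule: infinite_finite_induct) (auto simp: assms(1-4))
  then show ?thesis ..
qed

lemma sum_rotate_right:
  fixes n :: nat
  assumes "0 < n"
  shows "(\<Sum>i<n. g ((i + n - 1) mod n)) = (\<Sum>i<n. g i)"
proof (rule sum.reindex_bij_witness[where i = "\<lambda>i. Suc i mod n" and j = "\<lambda>i. (i + n - 1) mod n"])
  fix i assume "i \<in> {..<n}"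
  then show "Suc ((i + n - 1) mod n) mod n = i" and "(Suc i mod n + n - 1) mod n = i"
    by (auto simp: mod_Suc_eq Suc_diff_1 assms) (cases "Suc i = n", auto)
qed (use assms in auto)

section \<open>Linear functionals on a subspace\<close>

lemma zero_in_dual_space: "(\<lambda>_. 0) \<in> dual_space scale L"
  unfolding dual_space_def by simp

context vector_space
begin

lemma dual_space_zero: "subspace L \<Longrightarrow> \<xi> \<in> dual_space scale L \<Longrightarrow> \<xi> 0 = 0"
  unfolding dual_space_def using subspace_0 by force

lemma dual_space_sum:
  assumes "subspace L" "\<xi> \<in> dual_space scale L" "\<And>a. a \<in> A \<Longrightarrow> g a \<in> L"
  shows "\<xi> (sum g A) = (\<Sum>a\<in>A. \<xi> (g a))"
  using assms dual_space_zero[OF assms(1,2)]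
  by (intro additive_on_sum[where S = L]) (auto simp: dual_space_def subspace_def)

lemma fin_dim_imp_subspace: "fin_dim scale S \<Longrightarrow> subspace S"
  unfolding fin_dim_def by (metis subspace_span)

lemma fin_dim_basis:
  assumes "fin_dim scale S"
  shows "\<exists>B. finite B \<and> B \<subseteq> S \<and> independent B \<and> S \<subseteq> span B \<and> card B = dim S"
proof -
  obtain F where F: "finite F" "span F = S"
    using assms unfolding fin_dim_def by blast
  obtain B where B: "B \<subseteq> S" "independent B" "S \<subseteq> span B" "card B = dim S"
    by (rule basis_exists)
  have "finite B"
    using independent_span_bound[OF F(1) B(2)] B(1) unfolding F(2) by blast
  with B show ?thesis
    by blast
qed

lemma fin_dim_subspace:
  assumes "fin_dim scale L" "subspace S" "S \<subseteq> L"
  shows "fin_dim scale S"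
proof -
  obtain F where F: "finite F" "span F = L"
    using assms(1) unfolding fin_dim_def by blast
  obtain B where B: "B \<subseteq> S" "independent B" "S \<subseteq> span B"
    by (rule basis_exists)
  have "finite B"
    using independent_span_bound[OF F(1) B(2)] B(1) assms(3) unfolding F(2) by blast
  moreover have "span B = S"
    by (rule span_subspace[OF B(1,3) assms(2)])
  ultimately show ?thesis
    unfolding fin_dim_def using B(1) by blast
qed

lemma invariant_dual_in_fixed_dual:
  assumes L: "subspace L" and \<xi>: "\<xi> \<in> dual_space scale L"
    and invariant: "\<And>x. x \<in> L \<Longrightarrow> \<xi> (T x) = \<xi> x"
  shows "\<xi> \<in> fixed_dual scale L T"
proof -
  have kernel: "subspace {y \<in> L. \<xi> y = 0}"
    using L \<xi> dual_space_zero[OF L \<xi>] unfolding subspace_def dual_space_def by auto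
  have "\<xi> y = 0" if "y \<in> eigenspace scale L T c" "c \<noteq> 1" for y c
  proof -
    have y: "y \<in> L" "T y = c *s y"
      using that(1) unfolding eigenspace_def by auto
    have "c * \<xi> y = \<xi> (c *s y)"
      using y(1) \<xi> unfolding dual_space_def by auto
    also have "\<dots> = \<xi> y"
      using invariant[OF y(1)] unfolding y(2) .
    finally have "(c - 1) * \<xi> y = 0"
      by (simp add: algebra_simps)
    with \<open>c \<noteq> 1\<close> show ?thesis
      by simp
  qed
  then have "(\<Union>c\<in>{c. c \<noteq> 1}. eigenspace scale L T c) \<subseteq> {y \<in> L. \<xi> y = 0}"
    unfolding eigenspace_def by blast
  then have "span (\<Union>c\<in>{c. c \<noteq> 1}. eigenspace scale L T c) \<subseteq> {y \<in> L. \<xi> y = 0}"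
    using kernel by (rule span_minimal)
  then show ?thesis
    unfolding fixed_dual_def annihilator_def using \<xi> by blast
qed

end

section \<open>Eigenvectors of an operator of finite order\<close>

locale finite_order_operator = vector_space scale
  for scale :: "'a::field \<Rightarrow> 'b::ab_group_add \<Rightarrow> 'b" (infixr \<open>*s\<close> 75) +
  fixes L :: "'b set" and \<theta> :: "'b \<Rightarrow> 'b" and m :: nat and \<zeta> :: 'a
  assumes subspace_L: "subspace L"
    and maps_L: "\<And>x. x \<in> L \<Longrightarrow> \<theta> x \<in> L"
    and additive: "\<And>x y. x \<in> L \<Longrightarrow> y \<in> L \<Longrightarrow> \<theta> (x + y) = \<theta> x + \<theta> y"
    and homogeneous: "\<And>c x. x \<in> L \<Longrightarrow> \<theta> (c *s x) = c *s \<theta> x"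
    and period: "\<And>x. x \<in> L \<Longrightarrow> (\<theta> ^^ m) x = x"
    and root: "\<zeta> ^ m = 1"
    and primitive: "\<And>k. 0 < k \<Longrightarrow> k < m \<Longrightarrow> \<zeta> ^ k \<noteq> 1"
begin

lemma funpow_maps_L: "x \<in> L \<Longrightarrow> (\<theta> ^^ j) x \<in> L"
  by (induct j) (auto intro: maps_L)

lemma operator_sum: "(\<And>a. a \<in> A \<Longrightarrow> g a \<in> L) \<Longrightarrow> \<theta> (sum g A) = (\<Sum>a\<in>A. \<theta> (g a))"
  using subspace_L additive homogeneous[of x 0 for x]
  by (intro additive_on_sum[where S = L]) (auto simp: subspace_def)

definition eigen_average :: "nat \<Rightarrow> 'b \<Rightarrow> 'b" where
  "eigen_average k x = (\<Sum>j<m. \<zeta> ^ (k * j) *s (\<theta> ^^ j) x)"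

lemma eigen_average_in_L: "x \<in> L \<Longrightarrow> eigen_average k x \<in> L"
  unfolding eigen_average_def
  by (intro subspace_sum[OF subspace_L] subspace_scale[OF subspace_L] funpow_maps_L)

lemma eigen_average_eigenvector:
  assumes x: "x \<in> L" and k: "k \<le> m"
  shows "\<theta> (eigen_average k x) = \<zeta> ^ (m - k) *s eigen_average k x"
proof -
  define f where "f j = \<zeta> ^ (k * j) *s (\<theta> ^^ j) x" for j
  have "\<theta> (eigen_average k x) = (\<Sum>j<m. \<zeta> ^ (k * j) *s (\<theta> ^^ Suc j) x)"
    unfolding eigen_average_def using x
    by (subst operator_sum) (auto intro: subspace_scale[OF subspace_L] funpow_maps_L
        simp: homogeneous funpow_maps_L)
  then have "\<zeta> ^ k *s \<theta> (eigen_average k x) = (\<Sum>j<m. f (Suc j))"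
    by (simp add: scale_sum_right f_def power_add mult.commute)
  also have "\<dots> = (\<Sum>j<m. f j)"
  proof -
    have "(\<zeta> ^ k) ^ m = (\<zeta> ^ m) ^ k"
      by (simp add: power_mult[symmetric] mult.commute)
    then have "f m = f 0"
      using root period[OF x] by (simp add: f_def power_mult)
    have "f 0 + (\<Sum>j<m. f (Suc j)) = (\<Sum>j<Suc m. f j)"
      by (simp only: sum.lessThan_Suc_shift)
    also have "\<dots> = f 0 + (\<Sum>j<m. f j)"
      using \<open>f m = f 0\<close> by (simp add: add.commute)
    finally show ?thesis
      by simp
  qed
  finally have "\<zeta> ^ k *s \<theta> (eigen_average k x) = eigen_average k x"
    unfolding eigen_average_def f_def .
  moreover have "\<zeta> ^ (m - k) * \<zeta> ^ k = 1"
    using k root by (simp add: power_add[symmetric])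
  ultimately show ?thesis
    by (metis scale_scale scale_one)
qed

lemma sum_eigen_averages: "(\<Sum>k<m. eigen_average k x) = of_nat m *s x"
proof -
  have "(\<Sum>k<m. eigen_average k x) = (\<Sum>j<m. (\<Sum>k<m. (\<zeta> ^ j) ^ k) *s (\<theta> ^^ j) x)"
    unfolding eigen_average_def
    by (subst sum.swap) (simp add: scale_sum_left power_mult[symmetric] mult.commute)
  also have "\<dots> = (\<Sum>j<m. if j = 0 then of_nat m *s x else 0)"
  proof (rule sum.cong)
    fix j assume "j \<in> {..<m}"
    moreover have "(\<zeta> ^ j) ^ m = 1"
      using root by (metis power_mult mult.commute power_one)
    ultimately show "(\<Sum>k<m. (\<zeta> ^ j) ^ k) *s (\<theta> ^^ j) x = (if j = 0 then of_nat m *s x else 0)"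
      using primitive[of j] by (auto simp: sum_gp_strict)
  qed simp
  also have "\<dots> = of_nat m *s x"
    by (simp add: sum.delta')
  finally show ?thesis .
qed

lemma fixed_dual_root_eigen_average:
  assumes m: "of_nat m \<noteq> (0::'a)" and \<xi>: "\<xi> \<in> fixed_dual_root scale L \<theta> m \<zeta>" and x: "x \<in> L"
  shows "of_nat m * \<xi> x = \<xi> (eigen_average 0 x)"
proof -
  have dual: "\<xi> \<in> dual_space scale L"
    and vanish: "\<And>y. y \<in> span (\<Union>i\<in>{1..<m}. eigenspace scale L \<theta> (\<zeta> ^ i)) \<Longrightarrow> \<xi> y = 0"
    using \<xi> unfolding fixed_dual_root_def annihilator_def by auto
  have "of_nat m * \<xi> x = \<xi> (\<Sum>k<m. eigen_average k x)"
    using x dual unfolding sum_eigen_averages dual_space_def by simp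
  also have "\<dots> = (\<Sum>k<m. \<xi> (eigen_average k x))"
    using x by (intro dual_space_sum[OF subspace_L dual] eigen_average_in_L)
  also have "\<dots> = (\<Sum>k<m. if k = 0 then \<xi> (eigen_average 0 x) else 0)"
  proof (rule sum.cong)
    fix k assume k: "k \<in> {..<m}"
    have "eigen_average k x \<in> eigenspace scale L \<theta> (\<zeta> ^ (m - k))"
      unfolding eigenspace_def using x k by (auto simp: eigen_average_in_L eigen_average_eigenvector)
    moreover have "k \<noteq> 0 \<Longrightarrow> m - k \<in> {1..<m}"
      using k by auto
    ultimately show "\<xi> (eigen_average k x) = (if k = 0 then \<xi> (eigen_average 0 x) else 0)"
      by (auto intro!: vanish span_base)
  qed simp
  also have "\<dots> = \<xi> (eigen_average 0 x)"
    using m by (cases m) (simp_all add: sum.delta')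
  finally show ?thesis .
qed

lemma fixed_dual_root_invariant:
  assumes m: "of_nat m \<noteq> (0::'a)" and \<xi>: "\<xi> \<in> fixed_dual_root scale L \<theta> m \<zeta>" and x: "x \<in> L"
  shows "\<xi> (\<theta> x) = \<xi> x"
proof -
  have "eigen_average 0 (\<theta> x) = \<theta> (eigen_average 0 x)"
    unfolding eigen_average_def using x
    by (subst operator_sum) (auto intro: funpow_maps_L simp: funpow_swap1)
  also have "\<dots> = eigen_average 0 x"
    using eigen_average_eigenvector[OF x, of 0] root by simp
  finally have "of_nat m * \<xi> (\<theta> x) = of_nat m * \<xi> x"
    using fixed_dual_root_eigen_average[OF m \<xi>] x maps_L by metis
  then show ?thesis
    using m by simp
qed

end

section \<open>Direct sums of copies of a vector space\<close>

definition embed_at :: "nat \<Rightarrow> 'v \<Rightarrow> nat \<Rightarrow> 'v::zero" where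
  "embed_at i x = (\<lambda>j. if j = i then x else 0)"

definition direct_sum :: "nat \<Rightarrow> (nat \<Rightarrow> 'v set) \<Rightarrow> (nat \<Rightarrow> 'v::zero) set" where
  "direct_sum n S = {f. (\<forall>i<n. f i \<in> S i) \<and> (\<forall>i\<ge>n. f i = 0)}"

lemma sum_embed_at_components:
  fixes f :: "nat \<Rightarrow> 'v::comm_monoid_add"
  assumes "\<forall>i\<ge>n. f i = 0"
  shows "f = (\<Sum>i<n. embed_at i (f i))"
  using assms unfolding fun_eq_iff sum_fun_apply embed_at_def by auto

lemma vector_space_sum_scale:
  assumes "vector_space scale"
  shows "vector_space (sum_scale scale)"
proof -
  interpret vector_space scale by fact
  show ?thesis
    unfolding vector_space_def sum_scale_def plus_fun_def
    by (simp add: scale_right_distrib scale_left_distrib)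
qed

locale direct_sum_space = V: vector_space scale
  for scale :: "'a::field \<Rightarrow> 'b::ab_group_add \<Rightarrow> 'b"
begin

sublocale W: vector_space "sum_scale scale"
  by (rule vector_space_sum_scale[OF V.vector_space_axioms])

lemma module_hom_embed_at: "module_hom scale (sum_scale scale) (embed_at i)"
  by unfold_locales (auto simp: embed_at_def sum_scale_def fun_eq_iff)

lemma module_hom_component: "module_hom (sum_scale scale) scale (\<lambda>f. f i)"
  by unfold_locales (auto simp: sum_scale_def)

lemma embed_at_eq_iff: "embed_at i x = embed_at j y \<longleftrightarrow> x = y \<and> (i = j \<or> x = 0)"
proof
  assume "embed_at i x = embed_at j y"
  from fun_cong[OF this, of i] fun_cong[OF this, of j]
  show "x = y \<and> (i = j \<or> x = 0)"
    by (auto simp: embed_at_def split: if_splits)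
qed (auto simp: embed_at_def)

text \<open>Projecting a dependence relation among the embedded vectors to the \<open>i\<close>-th
  component gives one inside \<open>B i\<close>.\<close>
lemma independent_Union_embed_at:
  assumes "\<And>i. i < n \<Longrightarrow> V.independent (B i)"
  shows "W.independent (\<Union>i<n. embed_at i ` B i)" (is "W.independent ?E")
proof
  assume "W.dependent ?E"
  then obtain v where v: "v \<in> ?E" "v \<in> W.span (?E - {v})"
    unfolding W.dependent_def by blast
  then obtain i b where i: "i < n" and b: "b \<in> B i" and v_eq: "v = embed_at i b"
    by blast
  have "b \<noteq> 0"
    using assms[OF i] b V.dependent_zero by blast
  have image: "(\<lambda>f. f i) ` (?E - {v}) \<subseteq> insert 0 (B i - {b})"
  proof
    fix y assume "y \<in> (\<lambda>f. f i) ` (?E - {v})"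
    then obtain j c where "c \<in> B j" "embed_at j c \<noteq> v" "y = embed_at j c i"
      by blast
    then show "y \<in> insert 0 (B i - {b})"
      by (cases "j = i") (auto simp: embed_at_def v_eq)
  qed
  have "V.span ((\<lambda>f. f i) ` (?E - {v})) \<subseteq> V.span (B i - {b})"
    using V.span_mono[OF image] by simp
  moreover have "b \<in> V.span ((\<lambda>f. f i) ` (?E - {v}))"
    unfolding module_hom.span_image[OF module_hom_component]
    by (rule image_eqI[of _ _ v]) (use v(2) in \<open>simp_all add: v_eq embed_at_def\<close>)
  ultimately have "V.dependent (B i)"
    unfolding V.dependent_def using b by blast
  then show False
    using assms[OF i] by blast
qed

lemma direct_sum_subset_span:
  assumes "\<And>i. i < n \<Longrightarrow> S i \<subseteq> V.span (B i)"
  shows "direct_sum n S \<subseteq> W.span (\<Union>i<n. embed_at i ` B i)"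
proof
  fix f assume f: "f \<in> direct_sum n S"
  have "embed_at i (f i) \<in> W.span (\<Union>i<n. embed_at i ` B i)" if i: "i < n" for i
  proof -
    have "embed_at i (f i) \<in> embed_at i ` V.span (B i)"
      using f i assms[OF i] unfolding direct_sum_def by blast
    also have "\<dots> = W.span (embed_at i ` B i)"
      by (rule module_hom.span_image[OF module_hom_embed_at, symmetric])
    also have "\<dots> \<subseteq> W.span (\<Union>i<n. embed_at i ` B i)"
      using i by (intro W.span_mono) blast
    finally show ?thesis .
  qed
  then have "(\<Sum>i<n. embed_at i (f i)) \<in> W.span (\<Union>i<n. embed_at i ` B i)"
    by (intro W.span_sum) simp
  then show "f \<in> W.span (\<Union>i<n. embed_at i ` B i)"
    using f sum_embed_at_components[of n f] unfolding direct_sum_def by simp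
qed

lemma dim_direct_sum:
  assumes "\<And>i. i < n \<Longrightarrow> fin_dim scale (S i)"
  shows "W.dim (direct_sum n S) = (\<Sum>i<n. V.dim (S i))"
proof -
  have "\<forall>i\<in>{..<n}. \<exists>B. finite B \<and> B \<subseteq> S i \<and> V.independent B \<and> S i \<subseteq> V.span B \<and> card B = V.dim (S i)"
    using assms V.fin_dim_basis by blast
  from bchoice[OF this] obtain B where "\<forall>i\<in>{..<n}.
      finite (B i) \<and> B i \<subseteq> S i \<and> V.independent (B i) \<and> S i \<subseteq> V.span (B i) \<and> card (B i) = V.dim (S i)"
    by blast
  then have B: "\<And>i. i < n \<Longrightarrow> finite (B i)" "\<And>i. i < n \<Longrightarrow> B i \<subseteq> S i"
    "\<And>i. i < n \<Longrightarrow> V.independent (B i)" "\<And>i. i < n \<Longrightarrow> S i \<subseteq> V.span (B i)"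
    "\<And>i. i < n \<Longrightarrow> card (B i) = V.dim (S i)"
    by auto
  let ?E = "\<Union>i<n. embed_at i ` B i"
  have "?E \<subseteq> direct_sum n S"
    using subsetD[OF B(2)] V.subspace_0[OF V.fin_dim_imp_subspace[OF assms]]
    unfolding direct_sum_def by (auto simp: embed_at_def)
  then have "card ?E = W.dim (direct_sum n S)"
    using B(3,4) by (intro W.basis_card_eq_dim direct_sum_subset_span independent_Union_embed_at)
  moreover have "card ?E = (\<Sum>i<n. card (embed_at i ` B i))"
  proof (rule card_UN_disjoint)
    have "0 \<notin> B i" if "i < n" for i
      using B(3)[OF that] V.dependent_zero by blast
    then show "\<forall>i\<in>{..<n}. \<forall>j\<in>{..<n}. i \<noteq> j \<longrightarrow> embed_at i ` B i \<inter> embed_at j ` B j = {}"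
      by (auto simp: embed_at_eq_iff)
  qed (use B(1) in auto)
  moreover have "card (embed_at i ` B i) = card (B i)" for i
    by (rule card_image) (auto intro: inj_onI simp: embed_at_eq_iff)
  ultimately show ?thesis
    using B(5) by simp
qed

end

definition dual_component :: "((nat \<Rightarrow> 'v::zero) \<Rightarrow> 'k) \<Rightarrow> nat \<Rightarrow> 'v \<Rightarrow> 'k" where
  "dual_component \<Phi> i x = \<Phi> (embed_at i x)"

definition diagonal_dual :: "nat \<Rightarrow> 'v set \<Rightarrow> ('v \<Rightarrow> 'k) \<Rightarrow> (nat \<Rightarrow> 'v::zero) \<Rightarrow> 'k::comm_monoid_add" where
  "diagonal_dual n L \<xi> f = (if f \<in> sum_carrier n L then \<Sum>i<n. \<xi> (f i) else 0)"

lemma diagonal_dual_cyc_twist: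
  assumes "0 < n" and "\<And>x. x \<in> L \<Longrightarrow> \<theta> x \<in> L" and "\<And>x. x \<in> L \<Longrightarrow> \<xi> (\<theta> x) = \<xi> x"
    and y: "y \<in> sum_carrier n L"
  shows "diagonal_dual n L \<xi> (cyc_twist n \<theta> y) = diagonal_dual n L \<xi> y"
proof -
  have "cyc_twist n \<theta> y \<in> sum_carrier n L"
    using y assms(2) unfolding sum_carrier_def cyc_twist_def by auto
  moreover have "(\<Sum>i<n. \<xi> (cyc_twist n \<theta> y i)) = (\<Sum>i<n. \<xi> (y ((i + n - 1) mod n)))"
    using y assms(1,3) unfolding sum_carrier_def cyc_twist_def by (intro sum.cong) auto
  ultimately show ?thesis
    using y sum_rotate_right[OF assms(1), of "\<lambda>i. \<xi> (y i)"] unfolding diagonal_dual_def by simp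
qed

context direct_sum_space
begin

lemma subspace_sum_carrier: "V.subspace L \<Longrightarrow> W.subspace (sum_carrier n L)"
  unfolding W.subspace_def V.subspace_def sum_carrier_def sum_scale_def by auto

lemma embed_at_in_sum_carrier_iff:
  "V.subspace L \<Longrightarrow> i < n \<Longrightarrow> embed_at i x \<in> sum_carrier n L \<longleftrightarrow> x \<in> L"
  unfolding sum_carrier_def embed_at_def using V.subspace_0 by auto

lemma dual_component_in_dual_space:
  assumes L: "V.subspace L" and \<Phi>: "\<Phi> \<in> dual_space (sum_scale scale) (sum_carrier n L)" and i: "i < n"
  shows "dual_component \<Phi> i \<in> dual_space scale L"
  using \<Phi> embed_at_in_sum_carrier_iff[OF L i] V.subspace_add[OF L] V.subspace_scale[OF L]
    module_hom.add[OF module_hom_embed_at] module_hom.scale[OF module_hom_embed_at]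
  unfolding dual_space_def dual_component_def by simp

lemma dual_space_sum_components:
  assumes L: "V.subspace L" and \<Phi>: "\<Phi> \<in> dual_space (sum_scale scale) (sum_carrier n L)"
    and y: "y \<in> sum_carrier n L"
  shows "\<Phi> y = (\<Sum>i<n. dual_component \<Phi> i (y i))"
proof -
  have "\<Phi> y = \<Phi> (\<Sum>i<n. embed_at i (y i))"
    using y sum_embed_at_components[of n y] unfolding sum_carrier_def by simp
  also have "\<dots> = (\<Sum>i<n. \<Phi> (embed_at i (y i)))"
    using y embed_at_in_sum_carrier_iff[OF L]
    by (intro W.dual_space_sum[OF subspace_sum_carrier[OF L] \<Phi>]) (auto simp: sum_carrier_def)
  finally show ?thesis
    unfolding dual_component_def .
qed

lemma diagonal_dual_in_dual_space:
  assumes L: "V.subspace L" and \<xi>: "\<xi> \<in> dual_space scale L"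
  shows "diagonal_dual n L \<xi> \<in> dual_space (sum_scale scale) (sum_carrier n L)"
  using \<xi> W.subspace_add[OF subspace_sum_carrier[OF L]] W.subspace_scale[OF subspace_sum_carrier[OF L]]
  unfolding dual_space_def diagonal_dual_def
  by (auto simp: sum_carrier_def sum_scale_def sum.distrib sum_distrib_left)

lemma dual_component_diagonal_dual:
  assumes L: "V.subspace L" and \<xi>: "\<xi> \<in> dual_space scale L" and i: "i < n"
  shows "dual_component (diagonal_dual n L \<xi>) i = \<xi>"
proof
  fix x
  show "dual_component (diagonal_dual n L \<xi>) i x = \<xi> x"
  proof (cases "x \<in> L")
    case True
    then have "(\<Sum>j<n. \<xi> (embed_at i x j)) = (\<Sum>j<n. if j = i then \<xi> x else 0)"
      using V.dual_space_zero[OF L \<xi>] by (intro sum.cong) (auto simp: embed_at_def)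
    then show ?thesis
      using True i embed_at_in_sum_carrier_iff[OF L i]
      unfolding dual_component_def diagonal_dual_def by simp
  next
    case False
    then show ?thesis
      using \<xi> embed_at_in_sum_carrier_iff[OF L i]
      unfolding dual_component_def diagonal_dual_def dual_space_def by simp
  qed
qed

end

section \<open>Stabilisers in a direct sum of Lie algebras\<close>

lemma stabilizer_eq: "stabilizer L br \<xi> = {x \<in> L. \<forall>y\<in>L. \<xi> (br x y) = 0}"
  unfolding stabilizer_def coad_def fun_eq_iff by auto

lemma lie_index_le_dim_stabilizer:
  "\<xi> \<in> dual_space scale L \<Longrightarrow> lie_index scale L br \<le> vector_space.dim scale (stabilizer L br \<xi>)"
  unfolding lie_index_def by (rule cINF_lower) simp_all

lemma regular_dual_nonempty: "regular_dual scale L br \<noteq> {}"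
proof -
  let ?dims = "(\<lambda>\<xi>. vector_space.dim scale (stabilizer L br \<xi>)) ` dual_space scale L"
  have "lie_index scale L br \<in> ?dims"
    using zero_in_dual_space unfolding lie_index_def by (intro Inf_nat_def1) blast
  then show ?thesis
    unfolding regular_dual_def by force
qed

locale fd_lie_algebra =
  fixes scale :: "'a::field \<Rightarrow> 'b::ab_group_add \<Rightarrow> 'b" and L :: "'b set" and br :: "'b \<Rightarrow> 'b \<Rightarrow> 'b"
  assumes lie: "lie_algebra scale L br" and fin_dim_L: "fin_dim scale L"
begin

sublocale direct_sum_space scale
  using lie unfolding lie_algebra_def direct_sum_space_def by blast

lemma subspace_L: "V.subspace L"
  using lie unfolding lie_algebra_def by blast

lemma bracket_closed: "x \<in> L \<Longrightarrow> y \<in> L \<Longrightarrow> br x y \<in> L"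
  and bracket_add_left: "x \<in> L \<Longrightarrow> y \<in> L \<Longrightarrow> z \<in> L \<Longrightarrow> br (x + y) z = br x z + br y z"
  and bracket_add_right: "x \<in> L \<Longrightarrow> y \<in> L \<Longrightarrow> z \<in> L \<Longrightarrow> br x (y + z) = br x y + br x z"
  and bracket_scale_left: "x \<in> L \<Longrightarrow> y \<in> L \<Longrightarrow> br (scale c x) y = scale c (br x y)"
  using lie unfolding lie_algebra_def by auto

lemma bracket_zero_left: "x \<in> L \<Longrightarrow> br 0 x = 0"
  using bracket_add_left[of 0 0 x] V.subspace_0[OF subspace_L] by simp

lemma bracket_zero_right: "x \<in> L \<Longrightarrow> br x 0 = 0"
  using bracket_add_right[of x 0 0] V.subspace_0[OF subspace_L] by simp

lemma sum_bracket_embed_at: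
  assumes "x \<in> sum_carrier n L" "i < n" "z \<in> L"
  shows "sum_bracket n br x (embed_at i z) = embed_at i (br (x i) z)"
  using assms bracket_zero_right unfolding sum_bracket_def embed_at_def sum_carrier_def by auto

lemma subspace_stabilizer:
  assumes \<xi>: "\<xi> \<in> dual_space scale L"
  shows "V.subspace (stabilizer L br \<xi>)"
  using subspace_L \<xi> V.dual_space_zero[OF subspace_L \<xi>] V.subspace_0[OF subspace_L]
    bracket_add_left bracket_scale_left bracket_closed bracket_zero_left
  unfolding stabilizer_eq V.subspace_def dual_space_def by auto

lemma fin_dim_stabilizer: "\<xi> \<in> dual_space scale L \<Longrightarrow> fin_dim scale (stabilizer L br \<xi>)"
  by (intro V.fin_dim_subspace[OF fin_dim_L] subspace_stabilizer) (auto simp: stabilizer_eq)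

lemma stabilizer_sum_bracket:
  assumes \<Phi>: "\<Phi> \<in> dual_space (sum_scale scale) (sum_carrier n L)"
  shows "stabilizer (sum_carrier n L) (sum_bracket n br) \<Phi>
    = direct_sum n (\<lambda>i. stabilizer L br (dual_component \<Phi> i))"
proof (intro set_eqI iffI)
  fix x assume x: "x \<in> stabilizer (sum_carrier n L) (sum_bracket n br) \<Phi>"
  then have x_sum: "x \<in> sum_carrier n L"
    by (simp add: stabilizer_eq)
  have "x i \<in> stabilizer L br (dual_component \<Phi> i)" if i: "i < n" for i
    unfolding stabilizer_eq
  proof (intro CollectI conjI ballI)
    show "x i \<in> L"
      using x_sum i unfolding sum_carrier_def by blast
    fix z assume z: "z \<in> L"
    have "embed_at i z \<in> sum_carrier n L"
      using embed_at_in_sum_carrier_iff[OF subspace_L i] z by blast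
    then show "dual_component \<Phi> i (br (x i) z) = 0"
      using x by (simp add: stabilizer_eq dual_component_def sum_bracket_embed_at[OF x_sum i z, symmetric])
  qed
  then show "x \<in> direct_sum n (\<lambda>i. stabilizer L br (dual_component \<Phi> i))"
    using x_sum unfolding direct_sum_def sum_carrier_def by blast
next
  fix x assume x: "x \<in> direct_sum n (\<lambda>i. stabilizer L br (dual_component \<Phi> i))"
  then have x_sum: "x \<in> sum_carrier n L"
    unfolding direct_sum_def sum_carrier_def stabilizer_eq by blast
  have "\<Phi> (sum_bracket n br x y) = 0" if y: "y \<in> sum_carrier n L" for y
  proof -
    have "sum_bracket n br x y \<in> sum_carrier n L"
      using x_sum y bracket_closed unfolding sum_carrier_def sum_bracket_def by auto
    then have "\<Phi> (sum_bracket n br x y) = (\<Sum>i<n. dual_component \<Phi> i (br (x i) (y i)))"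
      by (simp add: dual_space_sum_components[OF subspace_L \<Phi>] sum_bracket_def)
    also have "\<dots> = 0"
      using x y unfolding direct_sum_def sum_carrier_def stabilizer_eq by simp
    finally show ?thesis .
  qed
  then show "x \<in> stabilizer (sum_carrier n L) (sum_bracket n br) \<Phi>"
    using x_sum by (simp add: stabilizer_eq)
qed

lemma dim_stabilizer_sum_bracket:
  assumes \<Phi>: "\<Phi> \<in> dual_space (sum_scale scale) (sum_carrier n L)"
  shows "W.dim (stabilizer (sum_carrier n L) (sum_bracket n br) \<Phi>)
    = (\<Sum>i<n. V.dim (stabilizer L br (dual_component \<Phi> i)))"
  unfolding stabilizer_sum_bracket[OF \<Phi>]
  by (intro dim_direct_sum fin_dim_stabilizer dual_component_in_dual_space[OF subspace_L \<Phi>])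

lemma lie_index_sum_bracket:
  "lie_index (sum_scale scale) (sum_carrier n L) (sum_bracket n br) = n * lie_index scale L br"
proof (rule antisym)
  obtain \<xi> where \<xi>: "\<xi> \<in> dual_space scale L" "V.dim (stabilizer L br \<xi>) = lie_index scale L br"
    using regular_dual_nonempty unfolding regular_dual_def by blast
  have "lie_index (sum_scale scale) (sum_carrier n L) (sum_bracket n br)
      \<le> W.dim (stabilizer (sum_carrier n L) (sum_bracket n br) (diagonal_dual n L \<xi>))"
    by (intro lie_index_le_dim_stabilizer diagonal_dual_in_dual_space subspace_L \<xi>(1))
  also have "\<dots> = n * lie_index scale L br"
    using \<xi> by (simp add: dim_stabilizer_sum_bracket diagonal_dual_in_dual_space subspace_L
        dual_component_diagonal_dual)
  finally show "lie_index (sum_scale scale) (sum_carrier n L) (sum_bracket n br) \<le> n * lie_index scale L br" .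
next
  have "n * lie_index scale L br \<le> W.dim (stabilizer (sum_carrier n L) (sum_bracket n br) \<Phi>)"
    if \<Phi>: "\<Phi> \<in> dual_space (sum_scale scale) (sum_carrier n L)" for \<Phi>
  proof -
    have "n * lie_index scale L br = (\<Sum>i<n. lie_index scale L br)"
      by simp
    also have "\<dots> \<le> (\<Sum>i<n. V.dim (stabilizer L br (dual_component \<Phi> i)))"
      by (intro sum_mono lie_index_le_dim_stabilizer dual_component_in_dual_space[OF subspace_L \<Phi>]) simp
    finally show ?thesis
      by (simp add: dim_stabilizer_sum_bracket[OF \<Phi>])
  qed
  with zero_in_dual_space show "n * lie_index scale L br \<le> lie_index (sum_scale scale) (sum_carrier n L) (sum_bracket n br)"
    unfolding lie_index_def by (intro cINF_greatest) blast+
qed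

lemma diagonal_dual_regular:
  assumes \<xi>: "\<xi> \<in> regular_dual scale L br"
  shows "diagonal_dual n L \<xi> \<in> regular_dual (sum_scale scale) (sum_carrier n L) (sum_bracket n br)"
proof -
  have dual: "\<xi> \<in> dual_space scale L" and dim: "V.dim (stabilizer L br \<xi>) = lie_index scale L br"
    using \<xi> unfolding regular_dual_def by auto
  show ?thesis
    using dual dim unfolding regular_dual_def
    by (simp add: diagonal_dual_in_dual_space subspace_L dim_stabilizer_sum_bracket
        dual_component_diagonal_dual lie_index_sum_bracket)
qed

end

theorem lemma2p1:
  fixes scale :: "'k::field_char_0 \<Rightarrow> 'v::ab_group_add \<Rightarrow> 'v"
    and L :: "'v set" and br :: "'v \<Rightarrow> 'v \<Rightarrow> 'v" and \<theta> :: "'v \<Rightarrow> 'v"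
    and m n :: nat and \<zeta> :: 'k
  assumes alg_closed: "\<forall>p :: 'k poly. degree p > 0 \<longrightarrow> (\<exists>x. poly p x = 0)"
    and lie: "lie_algebra scale L br"
    and fd: "fin_dim scale L"
    and aut: "lie_aut scale L br \<theta>"
    and m_pos: "m \<ge> 1"
    and order: "\<forall>x\<in>L. (\<theta> ^^ m) x = x"
    and order_min: "\<forall>k. 0 < k \<and> k < m \<longrightarrow> \<not> (\<forall>x\<in>L. (\<theta> ^^ k) x = x)"
    and zeta: "\<zeta> ^ m = 1" "\<forall>k. 0 < k \<and> k < m \<longrightarrow> \<zeta> ^ k \<noteq> 1"
    and n_pos: "n \<ge> 1"
    and hyp: "fixed_dual_root scale L \<theta> m \<zeta> \<inter> regular_dual scale L br \<noteq> {}"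
  shows "fixed_dual (sum_scale scale) (sum_carrier n L) (cyc_twist n \<theta>)
           \<inter> regular_dual (sum_scale scale) (sum_carrier n L) (sum_bracket n br) \<noteq> {}"
proof -
  interpret fd_lie_algebra scale L br
    by (rule fd_lie_algebra.intro[OF lie fd])
  interpret finite_order_operator scale L \<theta> m \<zeta>
    by (rule finite_order_operator.intro[OF V.vector_space_axioms], unfold_locales)
      (use aut order zeta subspace_L in \<open>auto simp: lie_aut_def bij_betw_def\<close>)
  obtain \<xi> where root: "\<xi> \<in> fixed_dual_root scale L \<theta> m \<zeta>" and regular: "\<xi> \<in> regular_dual scale L br"
    using hyp by blast
  have dual: "\<xi> \<in> dual_space scale L"
    using regular unfolding regular_dual_def by blast
  have invariant: "\<xi> (\<theta> x) = \<xi> x" if "x \<in> L" for x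
    using fixed_dual_root_invariant[OF _ root that] m_pos by simp
  let ?\<Xi> = "diagonal_dual n L \<xi>"
  have "?\<Xi> \<in> fixed_dual (sum_scale scale) (sum_carrier n L) (cyc_twist n \<theta>)"
    using n_pos maps_L invariant
    by (intro W.invariant_dual_in_fixed_dual subspace_sum_carrier subspace_L
        diagonal_dual_in_dual_space dual diagonal_dual_cyc_twist) auto
  moreover have "?\<Xi> \<in> regular_dual (sum_scale scale) (sum_carrier n L) (sum_bracket n br)"
    by (rule diagonal_dual_regular[OF regular])
  ultimately show ?thesis
    by blast
qed

end
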